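(* Assume the orthonormality assumption (A), let $T\ge 2$ and $z_{1:T}\in[V]^T$ with $z_T=q$ and $z_1\neq q$. Let $v_1\neq v_2$ in $[V]$ and suppose the only patterns "$q\,v$" occurring in $z_{1:T}$ are $q\,v_1$ and $q\,v_2$, i.e. $f(v)=0$ for all $v\notin\{v_1,v_2\}$, with $f(v_1)+f(v_2)\ge 1$. For fixed $\tau_3>0$ let $\xi^*_v=\lim_{\tau_2\to\infty}\lim_{\tau_1\to\infty}\xi_v(\tau_1,\tau_2,\tau_3)$. Then every maximizer of $v\mapsto\xi^*_v$ over $[V]$ belongs to $\{v_1,v_2\}\cup\operatorname{argmax}_{v\in[V]\setminus\{v_1,v_2\}}\pi_b(v\mid q)$.
   Context: Vocabulary $[V]=\{1,\dots,V\}$, dimension $d$. Given: embedding vectors $w_E(v)\in\mathbb R^d$ and unembedding vectors $w_U(v)\in\mathbb R^d$ for $v\in[V]$; relative positional vectors $r_0,r_{-1},\dots,r_{-(T-1)}\in\mathbb R^d$; matrices $\Phi_1,W_V^2\in\mathbb R^{d\times d}$; a bigram kernel $\pi_b(u\mid v)>0$ with $\sum_u\pi_b(u\mid v)=1$; parameters $\tau_1,\tau_2,\tau_3>0$. $\sigma$ denotes the softmax. The two-layer transformer with relative positional encoding ("stronger associative memory transformer") acts on $z_{1:T}\in[V]^T$ as follows. Set $W_K^1=\tau_1\sum_{k\in[V]}w_E(k)r_{-1}^\top$, $W_K^2=\tau_2\sum_{k\in[V]}w_E(k)(\Phi_1w_E(k))^\top$, $W_O^2=\tau_3\sum_{v\in[V]}w_U(v)(W_V^2w_E(v))^\top$.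 First layer: for $t\in[T]$ and $s\in[t]$, let $a_{t,s}=(w_E(z_s)+r_{s-t})^\top (W_K^1)^\top w_E(z_t)$ and $x^{(1)}_t=\sum_{s=1}^t\sigma(a_{t,\cdot})_s\,\Phi_1w_E(z_s)+w_E(z_t)$. Second layer: for $s\in[T]$ let $b_s=(x_s^{(1)})^\top (W_K^2)^\top x_T^{(1)}$ and $x_T^{(2)}=\sum_{s=1}^T\sigma(b)_s\,W_O^2W_V^2x_s^{(1)}+x_T^{(1)}$. Feed-forward layer: $W_1\in\mathbb R^{V\times d}$ has $v$-th row $w_E(v)^\top$, $W_2\in\mathbb R^{d\times V}$ has $v$-th column $\sum_{u=1}^V\log\pi_b(u\mid v)\,w_U(u)$, and $x_T=W_2\,\mathrm{ReLU}(W_1x_T^{(2)})+x_T^{(2)}$. The logits are $\xi_v=w_U(v)^\top x_T$ for $v\in[V]$ (written $\xi_v(\tau_1,\tau_2,\tau_3)$ to show dependence on the parameters). Orthonormality assumption (A): the $3V+T$ vectors $w_E(v),\ \Phi_1w_E(v),\ w_U(v)$ ($v\in[V]$) and $r_{-i}$ ($0\le i\le T-1$) form an orthonormal family in $\mathbb R^d$, and the $2V$ vectors $W_V^2w_E(v),\ W_V^2\Phi_1w_E(v)$ ($v\in[V]$) form an orthonormal family in $\mathbb R^d$. For $v\in[V]$, $f(v)=\#\{s\in\{2,\dots,T\}: z_{s-1}=q,\ z_s=v\}$. *)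

theory Defs
  imports "HOL-Analysis.Analysis"
begin

text \<open>Vocabulary [V] = {1..V}, positions [T] = {1..T}.
  The relative positional vector r_{-i} (0 <= i <= T-1) is represented as r i.
  The bigram kernel pi_b(u | v) is represented as pib u v.\<close>

definition softmax :: "(nat \<Rightarrow> real) \<Rightarrow> nat set \<Rightarrow> nat \<Rightarrow> real" where
  "softmax a S s = exp (a s) / (\<Sum>s'\<in>S. exp (a s'))"

definition outer :: "real^'d \<Rightarrow> real^'d \<Rightarrow> real^'d^'d" where
  "outer a b = (\<chi> i j. a$i * b$j)"

definition relu :: "real \<Rightarrow> real" where
  "relu x = max 0 x"

definition WK1 :: "(nat \<Rightarrow> real^'d) \<Rightarrow> (nat \<Rightarrow> real^'d) \<Rightarrow> nat \<Rightarrow> real \<Rightarrow> real^'d^'d" where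
  "WK1 wE r V \<tau>1 = \<tau>1 *\<^sub>R (\<Sum>k\<in>{1..V}. outer (wE k) (r 1))"

definition WK2 :: "(nat \<Rightarrow> real^'d) \<Rightarrow> real^'d^'d \<Rightarrow> nat \<Rightarrow> real \<Rightarrow> real^'d^'d" where
  "WK2 wE \<Phi>1 V \<tau>2 = \<tau>2 *\<^sub>R (\<Sum>k\<in>{1..V}. outer (wE k) (\<Phi>1 *v wE k))"

definition WO2 :: "(nat \<Rightarrow> real^'d) \<Rightarrow> (nat \<Rightarrow> real^'d) \<Rightarrow> real^'d^'d \<Rightarrow> nat \<Rightarrow> real \<Rightarrow> real^'d^'d" where
  "WO2 wE wU WV2 V \<tau>3 = \<tau>3 *\<^sub>R (\<Sum>v\<in>{1..V}. outer (wU v) (WV2 *v wE v))"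

definition layer1 :: "(nat \<Rightarrow> real^'d) \<Rightarrow> (nat \<Rightarrow> real^'d) \<Rightarrow> real^'d^'d \<Rightarrow> nat
    \<Rightarrow> (nat \<Rightarrow> nat) \<Rightarrow> real \<Rightarrow> nat \<Rightarrow> real^'d" where
  "layer1 wE r \<Phi>1 V z \<tau>1 t =
     (\<Sum>s\<in>{1..t}. softmax (\<lambda>s. (WK1 wE r V \<tau>1 *v (wE (z s) + r (t - s))) \<bullet> wE (z t)) {1..t} s
                  *\<^sub>R (\<Phi>1 *v wE (z s))) + wE (z t)"

definition layer2 :: "(nat \<Rightarrow> real^'d) \<Rightarrow> (nat \<Rightarrow> real^'d) \<Rightarrow> (nat \<Rightarrow> real^'d) \<Rightarrow> real^'d^'d
    \<Rightarrow> real^'d^'d \<Rightarrow> nat \<Rightarrow> nat \<Rightarrow> (nat \<Rightarrow> nat) \<Rightarrow> real \<Rightarrow> real \<Rightarrow> real \<Rightarrow> real^'d" where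
  "layer2 wE wU r \<Phi>1 WV2 V T z \<tau>1 \<tau>2 \<tau>3 =
     (let x1 = layer1 wE r \<Phi>1 V z \<tau>1 in
      (\<Sum>s\<in>{1..T}. softmax (\<lambda>s. (WK2 wE \<Phi>1 V \<tau>2 *v x1 s) \<bullet> x1 T) {1..T} s
                   *\<^sub>R (WO2 wE wU WV2 V \<tau>3 *v (WV2 *v x1 s))) + x1 T)"

text \<open>Output of the feed-forward layer x_T = W_2 ReLU(W_1 x^{(2)}_T) + x^{(2)}_T, where
  the v-th row of W_1 is wE(v)^T and the v-th column of W_2 is sum_u log pi_b(u|v) wU(u).\<close>
definition ffn_out :: "(nat \<Rightarrow> real^'d) \<Rightarrow> (nat \<Rightarrow> real^'d) \<Rightarrow> (nat \<Rightarrow> real^'d) \<Rightarrow> real^'d^'d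
    \<Rightarrow> real^'d^'d \<Rightarrow> (nat \<Rightarrow> nat \<Rightarrow> real) \<Rightarrow> nat \<Rightarrow> nat \<Rightarrow> (nat \<Rightarrow> nat)
    \<Rightarrow> real \<Rightarrow> real \<Rightarrow> real \<Rightarrow> real^'d" where
  "ffn_out wE wU r \<Phi>1 WV2 pib V T z \<tau>1 \<tau>2 \<tau>3 =
     (let x2 = layer2 wE wU r \<Phi>1 WV2 V T z \<tau>1 \<tau>2 \<tau>3 in
      (\<Sum>v\<in>{1..V}. relu (wE v \<bullet> x2) *\<^sub>R (\<Sum>u\<in>{1..V}. ln (pib u v) *\<^sub>R wU u)) + x2)"

definition xi :: "(nat \<Rightarrow> real^'d) \<Rightarrow> (nat \<Rightarrow> real^'d) \<Rightarrow> (nat \<Rightarrow> real^'d) \<Rightarrow> real^'d^'d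
    \<Rightarrow> real^'d^'d \<Rightarrow> (nat \<Rightarrow> nat \<Rightarrow> real) \<Rightarrow> nat \<Rightarrow> nat \<Rightarrow> (nat \<Rightarrow> nat)
    \<Rightarrow> real \<Rightarrow> real \<Rightarrow> real \<Rightarrow> nat \<Rightarrow> real" where
  "xi wE wU r \<Phi>1 WV2 pib V T z \<tau>1 \<tau>2 \<tau>3 v =
     wU v \<bullet> ffn_out wE wU r \<Phi>1 WV2 pib V T z \<tau>1 \<tau>2 \<tau>3"

datatype fam_idx = IE nat | IPhiE nat | IU nat | IR nat

fun famA :: "(nat \<Rightarrow> real^'d) \<Rightarrow> (nat \<Rightarrow> real^'d) \<Rightarrow> (nat \<Rightarrow> real^'d) \<Rightarrow> real^'d^'d
    \<Rightarrow> fam_idx \<Rightarrow> real^'d" where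
  "famA wE wU r \<Phi>1 (IE v) = wE v"
| "famA wE wU r \<Phi>1 (IPhiE v) = \<Phi>1 *v wE v"
| "famA wE wU r \<Phi>1 (IU v) = wU v"
| "famA wE wU r \<Phi>1 (IR i) = r i"

definition orthonormal_family :: "('i \<Rightarrow> real^'d) \<Rightarrow> 'i set \<Rightarrow> bool" where
  "orthonormal_family x I \<longleftrightarrow> (\<forall>i\<in>I. \<forall>j\<in>I. x i \<bullet> x j = (if i = j then 1 else 0))"

definition assumptionA :: "(nat \<Rightarrow> real^'d) \<Rightarrow> (nat \<Rightarrow> real^'d) \<Rightarrow> (nat \<Rightarrow> real^'d) \<Rightarrow> real^'d^'d
    \<Rightarrow> real^'d^'d \<Rightarrow> nat \<Rightarrow> nat \<Rightarrow> bool" where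
  "assumptionA wE wU r \<Phi>1 WV2 V T \<longleftrightarrow>
     orthonormal_family (famA wE wU r \<Phi>1)
       (IE ` {1..V} \<union> IPhiE ` {1..V} \<union> IU ` {1..V} \<union> IR ` {0..T-1}) \<and>
     orthonormal_family (\<lambda>x. case x of Inl v \<Rightarrow> WV2 *v wE v | Inr v \<Rightarrow> WV2 *v (\<Phi>1 *v wE v))
       (Inl ` {1..V} \<union> Inr ` {1..V})"

definition fcount :: "(nat \<Rightarrow> nat) \<Rightarrow> nat \<Rightarrow> nat \<Rightarrow> nat \<Rightarrow> nat" where
  "fcount z T q v = card {s\<in>{2..T}. z (s - 1) = q \<and> z s = v}"

end

theory Submission
  imports Defs "HOL-Real_Asymp.Real_Asymp"
begin

(* Under assumption (A) every weight matrix is an associative memory, so each attention score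
   and each logit can be computed in closed form.  The first layer is a previous-token head: its
   score at position t is tau1 [s = t - 1], so as tau1 \<rightarrow> \<infinity> position t records whether
   z (t - 1) = q.  The second layer compares these records with the query wE q at position T; as
   tau2 \<rightarrow> \<infinity> it attends uniformly to the positions right after an occurrence of q and writes
   tau3 wU (z s) there, while the feed-forward layer adds ln pib(. | q).  Hence
   xi*_v = ln pib(v | q) + tau3 f(v) / #{s. z (s - 1) = q}, which is ln pib(v | q) off {v1, v2}. *)

lemma sum_outer_mult_vec:
  "(\<Sum>k\<in>K. outer (x k) (y k)) *v v = (\<Sum>k\<in>K. (y k \<bullet> v) *\<^sub>R x k)"
proof (induction K rule: infinite_finite_induct)
  case (insert k K)
  have "outer (x k) (y k) *v v = (y k \<bullet> v) *\<^sub>R x k"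
    by (simp add: outer_def matrix_vector_mult_def inner_vec_def vec_eq_iff sum_distrib_left mult_ac)
  with insert show ?case by (simp add: matrix_vector_mult_add_rdistrib)
qed auto

lemma inner_sum_scaleR_orthonormal:
  assumes "finite B" "b \<in> B" and "\<And>a. a \<in> B \<Longrightarrow> x a \<bullet> y = (if a = b then 1 else 0)"
  shows "(\<Sum>a\<in>B. c a *\<^sub>R x a) \<bullet> y = c b"
proof -
  have "(\<Sum>a\<in>B. c a *\<^sub>R x a) \<bullet> y = (\<Sum>a\<in>B. if a = b then c a else 0)"
    unfolding inner_sum_left by (intro sum.cong) (auto simp: assms(3))
  then show ?thesis using assms(1,2) by simp
qed

lemma softmax_cong:
  "t \<in> S \<Longrightarrow> (\<And>s. s \<in> S \<Longrightarrow> a s = b s) \<Longrightarrow> softmax a S t = softmax b S t"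
  unfolding softmax_def by (metis sum.cong)

lemma tendsto_softmax:
  assumes "finite S" "S \<noteq> {}" and "t \<in> S"
    and lim: "\<And>s. s \<in> S \<Longrightarrow> ((\<lambda>x. f x s) \<longlongrightarrow> g s) F"
  shows "((\<lambda>x. softmax (f x) S t) \<longlongrightarrow> softmax g S t) F"
proof -
  have "(\<Sum>s\<in>S. exp (g s)) \<noteq> 0"
    using assms by (intro sum_pos[THEN less_imp_neq, symmetric]) auto
  then show ?thesis
    unfolding softmax_def using assms
    by (intro tendsto_divide tendsto_sum tendsto_exp lim) auto
qed

lemma softmax_scaled_indicator_tendsto:
  assumes S: "finite S" and A: "A \<subseteq> S" "A \<noteq> {}" and s: "s \<in> S"
  shows "((\<lambda>\<tau>. softmax (\<lambda>s. \<tau> * indicator A s) S s) \<longlongrightarrow> indicator A s / card A) at_top"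
proof -
  define n where "n = real (card A)"
  define m where "m = real (card (S - A))"
  have "n \<ge> 1"
    using A S by (simp add: n_def Suc_le_eq card_gt_0_iff finite_subset)
  have denom: "(\<Sum>s'\<in>S. exp (\<tau> * indicator A s')) = n * exp \<tau> + m" for \<tau>
  proof -
    have "(\<Sum>s'\<in>S. exp (\<tau> * indicator A s'))
        = (\<Sum>s'\<in>A. exp (\<tau> * indicator A s')) + (\<Sum>s'\<in>S - A. exp (\<tau> * indicator A s'))"
      using S A by (simp add: sum.subset_diff)
    also have "\<dots> = (\<Sum>s'\<in>A. exp \<tau>) + (\<Sum>s'\<in>S - A. 1)"
      by (intro arg_cong2[where f="(+)"] sum.cong) auto
    finally show ?thesis by (simp add: n_def m_def)
  qed
  show ?thesis
  proof (cases "s \<in> A")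
    case True
    have "((\<lambda>\<tau>. exp \<tau> / (n * exp \<tau> + m)) \<longlongrightarrow> inverse n) at_top"
      using \<open>n \<ge> 1\<close> by (simp add: m_def) real_asymp
    then show ?thesis using True by (simp add: softmax_def denom n_def inverse_eq_divide)
  next
    case False
    have "((\<lambda>\<tau>. 1 / (n * exp \<tau> + m)) \<longlongrightarrow> 0) at_top"
      using \<open>n \<ge> 1\<close> by (simp add: m_def) real_asymp
    then show ?thesis using False by (simp add: softmax_def denom)
  qed
qed

lemma ln_maximizer_maximizes:
  fixes g p :: "'a \<Rightarrow> real"
  assumes "m \<in> B" "B \<subseteq> S" and max: "\<forall>w\<in>S. g w \<le> g m"
    and g: "\<forall>w\<in>B. g w = ln (p w)" and p: "\<forall>w\<in>B. p w > 0"
  shows "\<forall>w\<in>B. p w \<le> p m"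
proof
  fix w assume w: "w \<in> B"
  have "ln (p w) \<le> ln (p m)"
    using max g w assms(1,2) by (metis subsetD)
  then show "p w \<le> p m"
    using p w assms(1) by simp
qed

locale orthonormal_transformer =
  fixes wE wU r :: "nat \<Rightarrow> real^'d"
    and \<Phi>1 WV2 :: "real^'d^'d"
    and V T q :: nat
    and z :: "nat \<Rightarrow> nat"
  assumes A: "assumptionA wE wU r \<Phi>1 WV2 V T"
    and T2: "T \<ge> 2"
    and z_range: "\<forall>s\<in>{1..T}. z s \<in> {1..V}"
    and zT: "z T = q"
begin

lemma z_in_vocab: "s \<in> {1..T} \<Longrightarrow> z s \<in> {1..V}"
  using z_range by blast

lemma q_in_vocab: "q \<in> {1..V}"
  using z_in_vocab[of T] T2 zT by auto

lemma famA_inner: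
  assumes "i \<in> IE ` {1..V} \<union> IPhiE ` {1..V} \<union> IU ` {1..V} \<union> IR ` {0..T-1}"
    and "j \<in> IE ` {1..V} \<union> IPhiE ` {1..V} \<union> IU ` {1..V} \<union> IR ` {0..T-1}"
  shows "famA wE wU r \<Phi>1 i \<bullet> famA wE wU r \<Phi>1 j = (if i = j then 1 else 0)"
  using A assms unfolding assumptionA_def orthonormal_family_def by blast

lemma value_family_inner:
  assumes "i \<in> Inl ` {1..V} \<union> Inr ` {1..V}" and "j \<in> Inl ` {1..V} \<union> Inr ` {1..V}"
  shows "(case i of Inl v \<Rightarrow> WV2 *v wE v | Inr v \<Rightarrow> WV2 *v (\<Phi>1 *v wE v)) \<bullet>
         (case j of Inl v \<Rightarrow> WV2 *v wE v | Inr v \<Rightarrow> WV2 *v (\<Phi>1 *v wE v)) = (if i = j then 1 else 0)"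
  using A assms unfolding assumptionA_def orthonormal_family_def by blast

lemma inner_vocab_vectors:
  assumes "a \<in> {1..V}" "b \<in> {1..V}"
  shows inner_wE_wE: "wE a \<bullet> wE b = (if a = b then 1 else 0)"
    and inner_wE_Phi: "wE a \<bullet> (\<Phi>1 *v wE b) = 0"
    and inner_wE_wU: "wE a \<bullet> wU b = 0"
    and inner_Phi_Phi: "(\<Phi>1 *v wE a) \<bullet> (\<Phi>1 *v wE b) = (if a = b then 1 else 0)"
    and inner_Phi_wU: "(\<Phi>1 *v wE a) \<bullet> wU b = 0"
    and inner_wU_wU: "wU a \<bullet> wU b = (if a = b then 1 else 0)"
    and inner_value_wE_wE: "(WV2 *v wE a) \<bullet> (WV2 *v wE b) = (if a = b then 1 else 0)"
    and inner_value_wE_Phi: "(WV2 *v wE a) \<bullet> (WV2 *v (\<Phi>1 *v wE b)) = 0"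
  using assms famA_inner[of "IE a" "IE b"] famA_inner[of "IE a" "IPhiE b"]
    famA_inner[of "IE a" "IU b"] famA_inner[of "IPhiE a" "IPhiE b"]
    famA_inner[of "IPhiE a" "IU b"] famA_inner[of "IU a" "IU b"]
    value_family_inner[of "Inl a" "Inl b"] value_family_inner[of "Inl a" "Inr b"]
  by auto

lemma inner_r_r: "i \<le> T - 1 \<Longrightarrow> j \<le> T - 1 \<Longrightarrow> r i \<bullet> r j = (if i = j then 1 else 0)"
  using famA_inner[of "IR i" "IR j"] by auto

lemma inner_r_wE: "i \<le> T - 1 \<Longrightarrow> b \<in> {1..V} \<Longrightarrow> r i \<bullet> wE b = 0"
  using famA_inner[of "IR i" "IE b"] by auto

definition attn1 :: "real \<Rightarrow> nat \<Rightarrow> nat \<Rightarrow> real" where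
  "attn1 \<tau>1 t = softmax (\<lambda>s. \<tau>1 * indicator {t - 1} s) {1..t}"

definition attn_on_q :: "real \<Rightarrow> nat \<Rightarrow> real" where
  "attn_on_q \<tau>1 t = (\<Sum>s\<in>{1..t}. attn1 \<tau>1 t s * indicator {s. z s = q} s)"

definition attn2 :: "real \<Rightarrow> real \<Rightarrow> nat \<Rightarrow> real" where
  "attn2 \<tau>1 \<tau>2 = softmax (\<lambda>s. \<tau>2 * attn_on_q \<tau>1 s) {1..T}"

abbreviation x1 :: "real \<Rightarrow> nat \<Rightarrow> real^'d" where
  "x1 \<tau>1 \<equiv> layer1 wE r \<Phi>1 V z \<tau>1"

lemma WK1_score:
  assumes t: "t \<in> {1..T}" and s: "s \<in> {1..t}"
  shows "(WK1 wE r V \<tau>1 *v (wE (z s) + r (t - s))) \<bullet> wE (z t) = \<tau>1 * indicator {t - 1} s"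
proof -
  have "(WK1 wE r V \<tau>1 *v y) \<bullet> wE (z t) = \<tau>1 * (r 1 \<bullet> y)" for y
    using inner_sum_scaleR_orthonormal[OF finite_atLeastAtMost z_in_vocab[OF t],
        where x=wE and c="\<lambda>_. r 1 \<bullet> y"] inner_wE_wE z_in_vocab[OF t]
    by (simp add: WK1_def scaleR_matrix_vector_assoc[symmetric] sum_outer_mult_vec)
  moreover have "r 1 \<bullet> (wE (z s) + r (t - s)) = indicator {t - 1} s"
    using t s T2 inner_r_wE[of 1 "z s"] inner_r_r[of 1 "t - s"] z_in_vocab[of s]
    by (auto simp: inner_add_right)
  ultimately show ?thesis by simp
qed

lemma layer1_eq:
  assumes "t \<in> {1..T}"
  shows "x1 \<tau>1 t = (\<Sum>s\<in>{1..t}. attn1 \<tau>1 t s *\<^sub>R (\<Phi>1 *v wE (z s))) + wE (z t)"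
  unfolding layer1_def attn1_def
  by (intro arg_cong2[where f="(+)"] sum.cong refl arg_cong2[where f="(*\<^sub>R)"] softmax_cong)
     (use WK1_score[OF assms] in auto)

lemma inner_Phi_q_layer1:
  assumes t: "t \<in> {1..T}"
  shows "(\<Phi>1 *v wE q) \<bullet> x1 \<tau>1 t = attn_on_q \<tau>1 t"
proof -
  have "(\<Phi>1 *v wE q) \<bullet> x1 \<tau>1 t
      = (\<Sum>s\<in>{1..t}. attn1 \<tau>1 t s * ((\<Phi>1 *v wE q) \<bullet> (\<Phi>1 *v wE (z s))))
        + (\<Phi>1 *v wE q) \<bullet> wE (z t)"
    by (simp add: layer1_eq[OF t] inner_add_right inner_sum_right)
  also have "(\<Phi>1 *v wE q) \<bullet> wE (z t) = 0"
    using inner_wE_Phi[OF z_in_vocab[OF t] q_in_vocab] by (simp add: inner_commute)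
  also have "(\<Sum>s\<in>{1..t}. attn1 \<tau>1 t s * ((\<Phi>1 *v wE q) \<bullet> (\<Phi>1 *v wE (z s)))) = attn_on_q \<tau>1 t"
    unfolding attn_on_q_def using t q_in_vocab z_in_vocab inner_Phi_Phi
    by (intro sum.cong) auto
  finally show ?thesis by simp
qed

lemma last_position: "T \<in> {1..T}"
  using T2 by simp

lemma inner_wE_layer1_last:
  assumes k: "k \<in> {1..V}"
  shows "wE k \<bullet> x1 \<tau>1 T = (if k = q then 1 else 0)"
proof -
  have "wE k \<bullet> x1 \<tau>1 T
      = (\<Sum>s\<in>{1..T}. attn1 \<tau>1 T s * (wE k \<bullet> (\<Phi>1 *v wE (z s)))) + wE k \<bullet> wE q"
    by (simp add: layer1_eq[OF last_position] inner_add_right inner_sum_right zT)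
  also have "(\<Sum>s\<in>{1..T}. attn1 \<tau>1 T s * (wE k \<bullet> (\<Phi>1 *v wE (z s)))) = 0"
    using k z_in_vocab inner_wE_Phi by (intro sum.neutral) auto
  finally show ?thesis
    using inner_wE_wE[OF k q_in_vocab] by simp
qed

lemma inner_wU_layer1_last:
  assumes u: "u \<in> {1..V}"
  shows "wU u \<bullet> x1 \<tau>1 T = 0"
proof -
  have "wU u \<bullet> x1 \<tau>1 T
      = (\<Sum>s\<in>{1..T}. attn1 \<tau>1 T s * (wU u \<bullet> (\<Phi>1 *v wE (z s)))) + wU u \<bullet> wE q"
    by (simp add: layer1_eq[OF last_position] inner_add_right inner_sum_right zT)
  also have "(\<Sum>s\<in>{1..T}. attn1 \<tau>1 T s * (wU u \<bullet> (\<Phi>1 *v wE (z s)))) = 0"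
    using u z_in_vocab inner_Phi_wU by (intro sum.neutral) (auto simp: inner_commute)
  finally show ?thesis
    using inner_wE_wU[OF q_in_vocab u] by (simp add: inner_commute)
qed

lemma inner_value_layer1:
  assumes u: "u \<in> {1..V}" and t: "t \<in> {1..T}"
  shows "(WV2 *v wE u) \<bullet> (WV2 *v x1 \<tau>1 t) = (if u = z t then 1 else 0)"
proof -
  have "(WV2 *v wE u) \<bullet> (WV2 *v x1 \<tau>1 t)
      = (\<Sum>s\<in>{1..t}. attn1 \<tau>1 t s * ((WV2 *v wE u) \<bullet> (WV2 *v (\<Phi>1 *v wE (z s)))))
        + (WV2 *v wE u) \<bullet> (WV2 *v wE (z t))"
    by (simp add: layer1_eq[OF t] inner_add_right inner_sum_right matrix_vector_right_distrib
        linear_sum[OF matrix_vector_mul_linear] matrix_vector_mult_scaleR)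
  also have "(\<Sum>s\<in>{1..t}. attn1 \<tau>1 t s * ((WV2 *v wE u) \<bullet> (WV2 *v (\<Phi>1 *v wE (z s))))) = 0"
    using u t z_in_vocab inner_value_wE_Phi by (intro sum.neutral) auto
  finally show ?thesis
    using inner_value_wE_wE[OF u z_in_vocab[OF t]] by simp
qed

lemma WK2_score:
  assumes s: "s \<in> {1..T}"
  shows "(WK2 wE \<Phi>1 V \<tau>2 *v x1 \<tau>1 s) \<bullet> x1 \<tau>1 T = \<tau>2 * attn_on_q \<tau>1 s"
proof -
  have "(WK2 wE \<Phi>1 V \<tau>2 *v x1 \<tau>1 s) \<bullet> x1 \<tau>1 T
      = \<tau>2 * ((\<Sum>k\<in>{1..V}. ((\<Phi>1 *v wE k) \<bullet> x1 \<tau>1 s) *\<^sub>R wE k) \<bullet> x1 \<tau>1 T)"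
    by (simp add: WK2_def scaleR_matrix_vector_assoc[symmetric] sum_outer_mult_vec)
  also have "(\<Sum>k\<in>{1..V}. ((\<Phi>1 *v wE k) \<bullet> x1 \<tau>1 s) *\<^sub>R wE k) \<bullet> x1 \<tau>1 T
      = (\<Phi>1 *v wE q) \<bullet> x1 \<tau>1 s"
    by (rule inner_sum_scaleR_orthonormal[OF finite_atLeastAtMost q_in_vocab inner_wE_layer1_last])
  finally show ?thesis
    using inner_Phi_q_layer1[OF s] by simp
qed

lemma WO2_value:
  assumes s: "s \<in> {1..T}"
  shows "WO2 wE wU WV2 V \<tau>3 *v (WV2 *v x1 \<tau>1 s) = \<tau>3 *\<^sub>R wU (z s)"
proof -
  have "WO2 wE wU WV2 V \<tau>3 *v (WV2 *v x1 \<tau>1 s)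
      = \<tau>3 *\<^sub>R (\<Sum>u\<in>{1..V}. ((WV2 *v wE u) \<bullet> (WV2 *v x1 \<tau>1 s)) *\<^sub>R wU u)"
    by (simp add: WO2_def scaleR_matrix_vector_assoc[symmetric] sum_outer_mult_vec)
  also have "(\<Sum>u\<in>{1..V}. ((WV2 *v wE u) \<bullet> (WV2 *v x1 \<tau>1 s)) *\<^sub>R wU u)
      = (\<Sum>u\<in>{1..V}. if u = z s then wU u else 0)"
    using s by (intro sum.cong) (auto simp: inner_value_layer1)
  finally show ?thesis
    using z_in_vocab[OF s] by simp
qed

lemma layer2_eq:
  "layer2 wE wU r \<Phi>1 WV2 V T z \<tau>1 \<tau>2 \<tau>3
     = (\<Sum>s\<in>{1..T}. attn2 \<tau>1 \<tau>2 s *\<^sub>R (\<tau>3 *\<^sub>R wU (z s))) + x1 \<tau>1 T"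
  unfolding layer2_def Let_def attn2_def
  by (intro arg_cong2[where f="(+)"] sum.cong refl arg_cong2[where f="(*\<^sub>R)"] softmax_cong)
     (auto simp: WK2_score WO2_value)

lemma inner_wE_layer2:
  assumes k: "k \<in> {1..V}"
  shows "wE k \<bullet> layer2 wE wU r \<Phi>1 WV2 V T z \<tau>1 \<tau>2 \<tau>3 = (if k = q then 1 else 0)"
proof -
  have "(\<Sum>s\<in>{1..T}. attn2 \<tau>1 \<tau>2 s * (\<tau>3 * (wE k \<bullet> wU (z s)))) = 0"
    using k z_in_vocab inner_wE_wU by (intro sum.neutral) auto
  then show ?thesis
    by (simp add: layer2_eq inner_add_right inner_sum_right inner_wE_layer1_last[OF k] mult.assoc)
qed

lemma ffn_out_eq:
  "ffn_out wE wU r \<Phi>1 WV2 pib V T z \<tau>1 \<tau>2 \<tau>3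
     = (\<Sum>u\<in>{1..V}. ln (pib u q) *\<^sub>R wU u) + layer2 wE wU r \<Phi>1 WV2 V T z \<tau>1 \<tau>2 \<tau>3"
proof -
  define W where "W v = (\<Sum>u\<in>{1..V}. ln (pib u v) *\<^sub>R wU u)" for v
  have "(\<Sum>k\<in>{1..V}. relu (wE k \<bullet> layer2 wE wU r \<Phi>1 WV2 V T z \<tau>1 \<tau>2 \<tau>3) *\<^sub>R W k)
      = (\<Sum>k\<in>{1..V}. if k = q then W k else 0)"
    by (intro sum.cong) (auto simp: inner_wE_layer2 relu_def)
  then show ?thesis
    using q_in_vocab unfolding ffn_out_def Let_def W_def by simp
qed

lemma xi_eq:
  assumes v: "v \<in> {1..V}"
  shows "xi wE wU r \<Phi>1 WV2 pib V T z \<tau>1 \<tau>2 \<tau>3 v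
     = ln (pib v q) + \<tau>3 * (\<Sum>s\<in>{s\<in>{1..T}. z s = v}. attn2 \<tau>1 \<tau>2 s)"
proof -
  have "wU v \<bullet> (\<Sum>u\<in>{1..V}. ln (pib u q) *\<^sub>R wU u) = ln (pib v q)"
    using inner_sum_scaleR_orthonormal[OF finite_atLeastAtMost v, where x=wU] inner_wU_wU v
    by (simp add: inner_commute)
  moreover have "(\<Sum>s\<in>{1..T}. attn2 \<tau>1 \<tau>2 s * (\<tau>3 * (wU v \<bullet> wU (z s))))
      = \<tau>3 * (\<Sum>s\<in>{s\<in>{1..T}. z s = v}. attn2 \<tau>1 \<tau>2 s)"
  proof -
    have "(\<Sum>s\<in>{1..T}. attn2 \<tau>1 \<tau>2 s * (\<tau>3 * (wU v \<bullet> wU (z s))))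
        = (\<Sum>s\<in>{1..T}. if z s = v then \<tau>3 * attn2 \<tau>1 \<tau>2 s else 0)"
      using v z_in_vocab inner_wU_wU by (intro sum.cong) auto
    then show ?thesis
      using sum.inter_filter[of "{1..T}" "\<lambda>s. \<tau>3 * attn2 \<tau>1 \<tau>2 s" "\<lambda>s. z s = v"]
      by (simp add: sum_distrib_left)
  qed
  ultimately show ?thesis
    by (simp add: xi_def ffn_out_eq layer2_eq inner_add_right inner_sum_right
        inner_wU_layer1_last[OF v] mult.assoc)
qed

definition after_q :: "nat set" where
  "after_q = {s\<in>{2..T}. z (s - 1) = q}"

lemma card_after_q_with_token: "card {s\<in>after_q. z s = v} = fcount z T q v"
  unfolding fcount_def after_q_def by (intro arg_cong[where f=card]) auto

lemma attn1_tendsto: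
  assumes t: "t \<in> {2..T}" and s: "s \<in> {1..t}"
  shows "((\<lambda>\<tau>1. attn1 \<tau>1 t s) \<longlongrightarrow> indicator {t - 1} s) at_top"
proof -
  have "t - 1 \<in> {1..t}" using t by auto
  then show ?thesis
    using softmax_scaled_indicator_tendsto[of "{1..t}" "{t - 1}" s] s unfolding attn1_def by simp
qed

text \<open>Needs \<open>z 1 \<noteq> q\<close>: at the first position there is no previous token, so the first
  layer attends to the position itself.\<close>
lemma attn_on_q_tendsto:
  assumes z1: "z 1 \<noteq> q" and t: "t \<in> {1..T}"
  shows "((\<lambda>\<tau>1. attn_on_q \<tau>1 t) \<longlongrightarrow> indicator after_q t) at_top"
proof (cases "t = 1")
  case True
  then show ?thesis
    using z1 by (simp add: attn_on_q_def after_q_def)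
next
  case False
  with t have t2: "t \<in> {2..T}" by simp
  have "((\<lambda>\<tau>1. attn_on_q \<tau>1 t)
      \<longlongrightarrow> (\<Sum>s\<in>{1..t}. indicator {t - 1} s * indicator {s. z s = q} s)) at_top"
    unfolding attn_on_q_def by (intro tendsto_sum tendsto_mult_right attn1_tendsto[OF t2]) auto
  moreover have "(\<Sum>s\<in>{1..t}. indicator {t - 1} s * indicator {s. z s = q} s)
      = (\<Sum>s\<in>{1..t}. if s = t - 1 then indicator {s. z s = q} (t - 1) else 0 :: real)"
    by (intro sum.cong) auto
  moreover have "t - 1 \<in> {1..t}" using t2 by auto
  ultimately show ?thesis
    using t2 by (simp add: after_q_def indicator_def)
qed

lemma xi_tendsto_tau1:
  assumes z1: "z 1 \<noteq> q" and v: "v \<in> {1..V}"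
  shows "((\<lambda>\<tau>1. xi wE wU r \<Phi>1 WV2 pib V T z \<tau>1 \<tau>2 \<tau>3 v)
    \<longlongrightarrow> ln (pib v q) + \<tau>3 *
          (\<Sum>s\<in>{s\<in>{1..T}. z s = v}. softmax (\<lambda>s. \<tau>2 * indicator after_q s) {1..T} s)) at_top"
  unfolding xi_eq[OF v] attn2_def
  using T2 by (intro tendsto_intros tendsto_softmax attn_on_q_tendsto[OF z1]) auto

lemma xi_limit_tendsto_tau2:
  assumes "after_q \<noteq> {}"
  shows "((\<lambda>\<tau>2. ln (pib v q) + \<tau>3 *
            (\<Sum>s\<in>{s\<in>{1..T}. z s = v}. softmax (\<lambda>s. \<tau>2 * indicator after_q s) {1..T} s))
    \<longlongrightarrow> ln (pib v q) + \<tau>3 * (fcount z T q v / card after_q)) at_top"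
proof -
  have "(\<Sum>s\<in>{s\<in>{1..T}. z s = v}. indicator after_q s :: real)
      = card ({s\<in>{1..T}. z s = v} \<inter> after_q)"
    by (simp add: indicator_def)
  also have "{s\<in>{1..T}. z s = v} \<inter> after_q = {s\<in>after_q. z s = v}"
    by (auto simp: after_q_def)
  finally have "(\<Sum>s\<in>{s\<in>{1..T}. z s = v}. indicator after_q s / card after_q)
      = fcount z T q v / card after_q"
    by (simp add: sum_divide_distrib[symmetric] card_after_q_with_token)
  moreover have "((\<lambda>\<tau>2. \<Sum>s\<in>{s\<in>{1..T}. z s = v}. softmax (\<lambda>s. \<tau>2 * indicator after_q s) {1..T} s)
      \<longlongrightarrow> (\<Sum>s\<in>{s\<in>{1..T}. z s = v}. indicator after_q s / card after_q)) at_top"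
    using assms
    by (intro tendsto_sum softmax_scaled_indicator_tendsto) (auto simp: after_q_def)
  ultimately show ?thesis
    by (intro tendsto_intros) simp
qed

end

theorem corollary1:
  fixes wE wU r :: "nat \<Rightarrow> real^'d"
    and \<Phi>1 WV2 :: "real^'d^'d"
    and pib :: "nat \<Rightarrow> nat \<Rightarrow> real"
    and V T q v1 v2 :: nat
    and z :: "nat \<Rightarrow> nat"
    and \<tau>3 :: real
  assumes A: "assumptionA wE wU r \<Phi>1 WV2 V T"
    and pib_pos: "\<forall>u\<in>{1..V}. \<forall>v\<in>{1..V}. pib u v > 0"
    and pib_sum: "\<forall>v\<in>{1..V}. (\<Sum>u\<in>{1..V}. pib u v) = 1"
    and tau3: "\<tau>3 > 0"
    and T2: "T \<ge> 2"
    and z_range: "\<forall>s\<in>{1..T}. z s \<in> {1..V}"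
    and zT: "z T = q"
    and z1: "z 1 \<noteq> q"
    and v1: "v1 \<in> {1..V}" and v2: "v2 \<in> {1..V}" and v12: "v1 \<noteq> v2"
    and f0: "\<forall>v\<in>{1..V} - {v1, v2}. fcount z T q v = 0"
    and f12: "fcount z T q v1 + fcount z T q v2 \<ge> 1"
  shows "\<exists>L :: real \<Rightarrow> nat \<Rightarrow> real. \<exists>\<xi>s :: nat \<Rightarrow> real.
           (\<forall>v\<in>{1..V}. \<forall>\<tau>2>0.
              ((\<lambda>\<tau>1. xi wE wU r \<Phi>1 WV2 pib V T z \<tau>1 \<tau>2 \<tau>3 v) \<longlongrightarrow> L \<tau>2 v) at_top) \<and>
           (\<forall>v\<in>{1..V}. ((\<lambda>\<tau>2. L \<tau>2 v) \<longlongrightarrow> \<xi>s v) at_top) \<and>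
           (\<forall>m\<in>{1..V}. (\<forall>v\<in>{1..V}. \<xi>s v \<le> \<xi>s m) \<longrightarrow>
              m \<in> {v1, v2} \<union>
                {u\<in>{1..V} - {v1, v2}. \<forall>w\<in>{1..V} - {v1, v2}. pib w q \<le> pib u q})"
proof -
  interpret orthonormal_transformer wE wU r \<Phi>1 WV2 V T q z
    using A T2 z_range zT by unfold_locales
  have "after_q \<noteq> {}"
    using f12 card_after_q_with_token[of v1] card_after_q_with_token[of v2] by auto
  define \<xi>s where "\<xi>s v = ln (pib v q) + \<tau>3 * (fcount z T q v / card after_q)" for v
  have \<xi>s_outside: "\<xi>s w = ln (pib w q)" if "w \<in> {1..V} - {v1, v2}" for w
    using f0 that by (simp add: \<xi>s_def)
  have maximizer: "m \<in> {v1, v2} \<union> {u\<in>{1..V} - {v1, v2}. \<forall>w\<in>{1..V} - {v1, v2}. pib w q \<le> pib u q}"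
    if "m \<in> {1..V}" and "\<forall>v\<in>{1..V}. \<xi>s v \<le> \<xi>s m" for m
    using ln_maximizer_maximizes[of m "{1..V} - {v1, v2}" "{1..V}" \<xi>s "\<lambda>w. pib w q"]
      that \<xi>s_outside pib_pos q_in_vocab by blast
  define L where "L \<tau>2 v = ln (pib v q) + \<tau>3 *
      (\<Sum>s\<in>{s\<in>{1..T}. z s = v}. softmax (\<lambda>s. \<tau>2 * indicator after_q s) {1..T} s)" for \<tau>2 v
  have lim_\<tau>1: "((\<lambda>\<tau>1. xi wE wU r \<Phi>1 WV2 pib V T z \<tau>1 \<tau>2 \<tau>3 v) \<longlongrightarrow> L \<tau>2 v) at_top"
    if "v \<in> {1..V}" for \<tau>2 v
    unfolding L_def by (rule xi_tendsto_tau1[OF z1 that])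
  have lim_\<tau>2: "((\<lambda>\<tau>2. L \<tau>2 v) \<longlongrightarrow> \<xi>s v) at_top" for v
    unfolding L_def \<xi>s_def by (rule xi_limit_tendsto_tau2[OF \<open>after_q \<noteq> {}\<close>])
  show ?thesis
    using lim_\<tau>1 lim_\<tau>2 maximizer by (intro exI[of _ L] exI[of _ \<xi>s]) blast
qed

end
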